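(* Let $a<b<c$ be integers, so that the infinite arc $(-\infty,b)$ crosses the finite arc $(a,c)$. Then there are non-split short exact sequences in $\mathcal{C}_2$ \[ 0\to(-\infty,b)\xrightarrow{f}(a,b)\oplus(-\infty,c)\xrightarrow{g}(a,c)\to0,\qquad 0\to(a,c)\xrightarrow{f'}(b,c)\oplus(-\infty,a)\xrightarrow{g'}(-\infty,b)\to0. \]
   Context: Let $R=\mathbb{C}[x,y]/(x^2)$, graded with $\deg x=1$, $\deg y=-1$; $M(j)_n=M_{j+n}$. $\mathcal{C}_2$ is the exact category of finitely generated $\mathbb{Z}$-graded maximal Cohen–Macaulay $R$-modules with degree-preserving morphisms. An arc is a pair $(a,b)$ with $a\in\mathbb{Z}\cup\{-\infty\}$, $b\in\mathbb{Z}$, $a<b$; a finite arc $(a,b)$ ($a\in\mathbb{Z}$) denotes the module $(x,y^{b-a-1})(1-b)$ (where $(x,y^0)=R$), and an infinite arc $(-\infty,b)$ denotes $\mathbb{C}[y](-b)=(R/(x))(-b)$. *)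

theory Defs
  imports "HOL-Computational_Algebra.Polynomial"
begin

text \<open>Graded modules over R = C[x,y]/(x^2), deg x = 1, deg y = -1, given concretely:
  a carrier set inside an ambient type, C-vector space operations, the actions
  of x and y, and the homogeneous components (degree n part).\<close>

record 'a gmod =
  gcar :: "'a set"
  gzero :: 'a
  gadd :: "'a \<Rightarrow> 'a \<Rightarrow> 'a"
  gscale :: "complex \<Rightarrow> 'a \<Rightarrow> 'a"
  gx :: "'a \<Rightarrow> 'a"
  gy :: "'a \<Rightarrow> 'a"
  ghom :: "int \<Rightarrow> 'a set"

definition gmor :: "'a gmod \<Rightarrow> 'b gmod \<Rightarrow> ('a \<Rightarrow> 'b) \<Rightarrow> bool" where
  "gmor M N f \<longleftrightarrow>
     (\<forall>v\<in>gcar M. f v \<in> gcar N) \<and>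
     (\<forall>u\<in>gcar M. \<forall>v\<in>gcar M. f (gadd M u v) = gadd N (f u) (f v)) \<and>
     (\<forall>c. \<forall>v\<in>gcar M. f (gscale M c v) = gscale N c (f v)) \<and>
     (\<forall>v\<in>gcar M. f (gx M v) = gx N (f v)) \<and>
     (\<forall>v\<in>gcar M. f (gy M v) = gy N (f v)) \<and>
     (\<forall>n. \<forall>v\<in>ghom M n. f v \<in> ghom N n)"

definition short_exact :: "'a gmod \<Rightarrow> 'b gmod \<Rightarrow> 'c gmod \<Rightarrow> ('a \<Rightarrow> 'b) \<Rightarrow> ('b \<Rightarrow> 'c) \<Rightarrow> bool" where
  "short_exact A B C f g \<longleftrightarrow>
     gmor A B f \<and> gmor B C g \<and> inj_on f (gcar A) \<and> g ` gcar B = gcar C \<and>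
     (\<forall>v\<in>gcar B. g v = gzero C \<longleftrightarrow> v \<in> f ` gcar A)"

text \<open>A short exact sequence splits iff f has a retraction in the category.\<close>
definition ses_split :: "'a gmod \<Rightarrow> 'b gmod \<Rightarrow> ('a \<Rightarrow> 'b) \<Rightarrow> bool" where
  "ses_split A B f \<longleftrightarrow> (\<exists>r. gmor B A r \<and> (\<forall>v\<in>gcar A. r (f v) = v))"

definition gsum :: "'a gmod \<Rightarrow> 'b gmod \<Rightarrow> ('a \<times> 'b) gmod" where
  "gsum M N = \<lparr> gcar = gcar M \<times> gcar N, gzero = (gzero M, gzero N),
     gadd = (\<lambda>(u1,u2) (v1,v2). (gadd M u1 v1, gadd N u2 v2)),
     gscale = (\<lambda>c (v1,v2). (gscale M c v1, gscale N c v2)),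
     gx = (\<lambda>(v1,v2). (gx M v1, gx N v2)),
     gy = (\<lambda>(v1,v2). (gy M v1, gy N v2)),
     ghom = (\<lambda>n. ghom M n \<times> ghom N n) \<rparr>"

definition gshift :: "'a gmod \<Rightarrow> int \<Rightarrow> 'a gmod" where
  "gshift M j = M\<lparr> ghom := (\<lambda>n. ghom M (j + n)) \<rparr>"

text \<open>Element (p,q) of R represents p(y) + x q(y).\<close>
type_synonym relt = "complex poly \<times> complex poly"

definition R_hom :: "int \<Rightarrow> relt set" where
  "R_hom d = {(p,q). \<exists>c c'. p = monom c (nat (-d)) \<and> q = monom c' (nat (1-d)) \<and>
                         (d > 0 \<longrightarrow> c = 0) \<and> (d > 1 \<longrightarrow> c' = 0)}"

text \<open>The ideal (x, y^m) of R (for m = 0 this is R itself).\<close>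
definition ideal_xy :: "nat \<Rightarrow> relt gmod" where
  "ideal_xy m = \<lparr> gcar = {(p,q). [:0,1:] ^ m dvd p}, gzero = (0,0),
     gadd = (\<lambda>(p,q) (p',q'). (p+p', q+q')),
     gscale = (\<lambda>c (p,q). (smult c p, smult c q)),
     gx = (\<lambda>(p,q). (0, p)),
     gy = (\<lambda>(p,q). ([:0,1:] * p, [:0,1:] * q)),
     ghom = (\<lambda>d. R_hom d \<inter> {(p,q). [:0,1:] ^ m dvd p}) \<rparr>"

text \<open>C[y] = R/(x), elements (p,0), x acting by zero.\<close>
definition cy_mod :: "relt gmod" where
  "cy_mod = \<lparr> gcar = {(p,q). q = 0}, gzero = (0,0),
     gadd = (\<lambda>(p,q) (p',q'). (p+p', q+q')),
     gscale = (\<lambda>c (p,q). (smult c p, smult c q)),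
     gx = (\<lambda>(p,q). (0, 0)),
     gy = (\<lambda>(p,q). ([:0,1:] * p, [:0,1:] * q)),
     ghom = (\<lambda>d. {(p,q). \<exists>c. p = monom c (nat (-d)) \<and> q = 0 \<and> (d > 0 \<longrightarrow> c = 0)}) \<rparr>"

text \<open>Finite arc (a,b): (x, y^{b-a-1})(1-b). Infinite arc (-\<infinity>,b): C[y](-b).\<close>
definition farc :: "int \<Rightarrow> int \<Rightarrow> relt gmod" where
  "farc a b = gshift (ideal_xy (nat (b - a - 1))) (1 - b)"

definition iarc :: "int \<Rightarrow> relt gmod" where
  "iarc b = gshift cy_mod (- b)"

end

theory Submission
  imports Defs
begin

text \<open>All four maps are built from multiplication and exact division by powers of y, so
  exactness is a computation in C[y], and they preserve degrees because they shift the
  exponent of each homogeneous element c y^e by the right amount. Neither sequence splits,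
  because a retraction r of f would commute with x and y. In the first sequence x acts by
  zero on (-\<infinity>,b), so r kills x y^(b-a-1) = y^(b-a-1) x in (a,b); C[y] being torsion-free,
  r kills x, and r(f 1) = r(x, y^(c-b)) = 1 would make 1 a multiple of y^(c-b). In the second,
  r(1) for the generator 1 of (-\<infinity>,a) is annihilated by x, hence lies in x (a,c); then
  r(f'(y^(c-a-1))) = r(y^(c-a-1), 1) = y^(c-a-1) forces r to send y^(c-b-1) in (b,c) to
  y^(c-b-1) modulo x, which is not in (x, y^(c-a-1)).\<close>

abbreviation Y :: "complex poly" where
  "Y \<equiv> [:0, 1:]"

subsection \<open>Homogeneous elements of C[y]\<close>

text \<open>The span of y^e in C[y]; for e < 0 it is {0}, not the span of y^(nat e) = 1.\<close>
definition yhom :: "int \<Rightarrow> complex poly set" where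
  "yhom e = {p. \<exists>c. p = monom c (nat e) \<and> (e < 0 \<longrightarrow> c = 0)}"

lemma R_hom_eq: "R_hom d = yhom (- d) \<times> yhom (1 - d)"
  by (auto simp: R_hom_def yhom_def)

lemma zero_in_yhom [simp]: "0 \<in> yhom e"
  by (auto simp: yhom_def intro: exI[of _ 0])

lemma yhom_diff:
  assumes "p \<in> yhom e" "q \<in> yhom e"
  shows "p - q \<in> yhom e"
proof -
  obtain c d where "p = monom c (nat e)" "q = monom d (nat e)" "e < 0 \<longrightarrow> c = 0 \<and> d = 0"
    using assms by (auto simp: yhom_def)
  then show ?thesis
    unfolding yhom_def by (intro CollectI exI[of _ "c - d"]) (simp add: diff_monom)
qed

lemma Y_power_mult_monom: "Y ^ k * monom c n = monom c (n + k)"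
  by (simp add: monom_altdef power_add mult_ac)

lemma Y_power_dvd_Y_power_iff: "Y ^ m dvd Y ^ n \<longleftrightarrow> m \<le> n"
proof
  assume "Y ^ m dvd Y ^ n"
  then have "degree (Y ^ m) \<le> degree (Y ^ n)"
    by (rule dvd_imp_degree_le) simp
  then show "m \<le> n"
    by (simp add: degree_linear_power)
qed (rule le_imp_power_dvd)

lemma Y_power_dvd_monom: "Y ^ k dvd monom c n \<Longrightarrow> c \<noteq> 0 \<Longrightarrow> k \<le> n"
  by (metis Y_power_dvd_Y_power_iff dvd_smult_cancel monom_altdef)

lemma Y_power_mult_yhom: "p \<in> yhom e \<Longrightarrow> Y ^ k * p \<in> yhom (e + int k)"
  by (auto simp: yhom_def Y_power_mult_monom nat_add_distrib)

lemma yhom_div_Y_power: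
  assumes p: "p \<in> yhom e" and dvd: "Y ^ k dvd p"
  shows "p div Y ^ k \<in> yhom (e - int k)"
proof -
  obtain c where c: "p = monom c (nat e)" "e < 0 \<longrightarrow> c = 0"
    using p by (auto simp: yhom_def)
  show ?thesis
  proof (cases "c = 0")
    case False
    then have "k \<le> nat e"
      using Y_power_dvd_monom dvd c(1) by blast
    then have "nat (e - int k) + k = nat e"
      by linarith
    then have "p = Y ^ k * monom c (nat (e - int k))"
      using c(1) by (simp add: Y_power_mult_monom)
    then show ?thesis
      using \<open>k \<le> nat e\<close> False c(2) by (auto simp: yhom_def)
  qed (simp add: c)
qed

lemma gmorI:
  assumes "\<And>v. v \<in> gcar M \<Longrightarrow> f v \<in> gcar N"
    and "\<And>u v. u \<in> gcar M \<Longrightarrow> v \<in> gcar M \<Longrightarrow> f (gadd M u v) = gadd N (f u) (f v)"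
    and "\<And>c v. v \<in> gcar M \<Longrightarrow> f (gscale M c v) = gscale N c (f v)"
    and "\<And>v. v \<in> gcar M \<Longrightarrow> f (gx M v) = gx N (f v)"
    and "\<And>v. v \<in> gcar M \<Longrightarrow> f (gy M v) = gy N (f v)"
    and "\<And>n v. v \<in> ghom M n \<Longrightarrow> f v \<in> ghom N n"
  shows "gmor M N f"
  using assms by (simp add: gmor_def)

lemma gmor_carrier: "gmor M N f \<Longrightarrow> v \<in> gcar M \<Longrightarrow> f v \<in> gcar N"
  by (simp add: gmor_def)

lemma gmor_gadd:
  "gmor M N f \<Longrightarrow> u \<in> gcar M \<Longrightarrow> v \<in> gcar M \<Longrightarrow> f (gadd M u v) = gadd N (f u) (f v)"
  by (simp add: gmor_def)

lemma gmor_gscale: "gmor M N f \<Longrightarrow> v \<in> gcar M \<Longrightarrow> f (gscale M c v) = gscale N c (f v)"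
  by (simp add: gmor_def)

lemma gmor_gx: "gmor M N f \<Longrightarrow> v \<in> gcar M \<Longrightarrow> f (gx M v) = gx N (f v)"
  by (simp add: gmor_def)

lemma gmor_gy_funpow:
  assumes "gmor M N f" "\<And>u. u \<in> gcar M \<Longrightarrow> gy M u \<in> gcar M" "v \<in> gcar M"
  shows "f ((gy M ^^ k) v) = (gy N ^^ k) (f v)"
proof -
  have "(gy M ^^ k) v \<in> gcar M \<and> f ((gy M ^^ k) v) = (gy N ^^ k) (f v)"
    using assms by (induction k) (auto simp: gmor_def)
  then show ?thesis ..
qed

lemma gsum_simps:
  "gcar (gsum M N) = gcar M \<times> gcar N"
  "gzero (gsum M N) = (gzero M, gzero N)"
  "gadd (gsum M N) (u1, u2) (v1, v2) = (gadd M u1 v1, gadd N u2 v2)"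
  "gscale (gsum M N) c (v1, v2) = (gscale M c v1, gscale N c v2)"
  "gx (gsum M N) (v1, v2) = (gx M v1, gx N v2)"
  "gy (gsum M N) (v1, v2) = (gy M v1, gy N v2)"
  "ghom (gsum M N) n = ghom M n \<times> ghom N n"
  by (simp_all add: gsum_def)

lemma gsum_gy_funpow: "(gy (gsum M N) ^^ k) (u, v) = ((gy M ^^ k) u, (gy N ^^ k) v)"
  by (induction k) (auto simp: gsum_simps)

lemma gsum_gy_closed:
  assumes "\<And>u. u \<in> gcar M \<Longrightarrow> gy M u \<in> gcar M" "\<And>v. v \<in> gcar N \<Longrightarrow> gy N v \<in> gcar N"
  shows "w \<in> gcar (gsum M N) \<Longrightarrow> gy (gsum M N) w \<in> gcar (gsum M N)"
  using assms by (auto simp: gsum_simps)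

lemma farc_simps:
  "gcar (farc a b) = {(p, q). Y ^ nat (b - a - 1) dvd p}"
  "gzero (farc a b) = (0, 0)"
  "gadd (farc a b) = (\<lambda>(p, q) (p', q'). (p + p', q + q'))"
  "gscale (farc a b) = (\<lambda>c (p, q). (smult c p, smult c q))"
  "gx (farc a b) = (\<lambda>(p, q). (0, p))"
  "gy (farc a b) = (\<lambda>(p, q). (Y * p, Y * q))"
  "ghom (farc a b) n =
     {(p, q). p \<in> yhom (b - 1 - n) \<and> q \<in> yhom (b - n) \<and> Y ^ nat (b - a - 1) dvd p}"
  by (auto simp: farc_def gshift_def ideal_xy_def R_hom_eq)

lemma iarc_simps:
  "gcar (iarc b) = {(p, q). q = 0}"
  "gzero (iarc b) = (0, 0)"
  "gadd (iarc b) = (\<lambda>(p, q) (p', q'). (p + p', q + q'))"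
  "gscale (iarc b) = (\<lambda>c (p, q). (smult c p, smult c q))"
  "gx (iarc b) = (\<lambda>(p, q). (0, 0))"
  "gy (iarc b) = (\<lambda>(p, q). (Y * p, Y * q))"
  "ghom (iarc b) n = yhom (b - n) \<times> {0}"
  by (auto simp: iarc_def gshift_def cy_mod_def yhom_def)

lemma farc_gy_funpow: "(gy (farc a b) ^^ k) (p, q) = (Y ^ k * p, Y ^ k * q)"
  by (induction k) (auto simp: farc_simps mult_ac)

lemma iarc_gy_funpow: "(gy (iarc b) ^^ k) (p, q) = (Y ^ k * p, Y ^ k * q)"
  by (induction k) (auto simp: iarc_simps mult_ac)

lemma farc_gy_closed: "v \<in> gcar (farc a b) \<Longrightarrow> gy (farc a b) v \<in> gcar (farc a b)"
  by (auto simp: farc_simps intro: dvd_mult simp del: mult_pCons_left)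

lemma iarc_gy_closed: "v \<in> gcar (iarc b) \<Longrightarrow> gy (iarc b) v \<in> gcar (iarc b)"
  by (auto simp: iarc_simps)

subsection \<open>The first sequence\<close>

text \<open>In R: f(1) = (x, y^(c-b)) and g(u, r) = y^(c-b) u - r.\<close>
definition ses1_mono :: "int \<Rightarrow> int \<Rightarrow> relt \<Rightarrow> relt \<times> relt" where
  "ses1_mono b c = (\<lambda>(p, q). ((0, p), (Y ^ nat (c - b) * p, 0)))"

definition ses1_epi :: "int \<Rightarrow> int \<Rightarrow> relt \<times> relt \<Rightarrow> relt" where
  "ses1_epi b c = (\<lambda>((p, q), (r, s)). (Y ^ nat (c - b) * p, Y ^ nat (c - b) * q - r))"

lemma gmor_ses1_mono:
  assumes "b \<le> c"
  shows "gmor (iarc b) (gsum (farc a b) (iarc c)) (ses1_mono b c)"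
proof (rule gmorI)
  fix n v assume "v \<in> ghom (iarc b) n"
  then obtain p where v: "v = (p, 0)" and p: "p \<in> yhom (b - n)"
    by (auto simp: iarc_simps)
  have "Y ^ nat (c - b) * p \<in> yhom (c - n)"
    using Y_power_mult_yhom[OF p, of "nat (c - b)"] assms by simp
  with p show "ses1_mono b c v \<in> ghom (gsum (farc a b) (iarc c)) n"
    by (simp add: v ses1_mono_def gsum_simps farc_simps iarc_simps)
qed (auto simp: ses1_mono_def gsum_simps farc_simps iarc_simps algebra_simps)

lemma gmor_ses1_epi:
  assumes "a < b" "b \<le> c"
  shows "gmor (gsum (farc a b) (iarc c)) (farc a c) (ses1_epi b c)"
proof (rule gmorI)
  have "nat (c - a - 1) = nat (c - b) + nat (b - a - 1)"
    using assms by simp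
  then have shift: "Y ^ nat (c - a - 1) = Y ^ nat (c - b) * Y ^ nat (b - a - 1)"
    by (simp add: power_add)
  show "ses1_epi b c v \<in> gcar (farc a c)" if "v \<in> gcar (gsum (farc a b) (iarc c))" for v
    using that by (auto simp: ses1_epi_def gsum_simps farc_simps iarc_simps shift mult_dvd_mono)
  fix n v assume "v \<in> ghom (gsum (farc a b) (iarc c)) n"
  then obtain p q r where v: "v = ((p, q), (r, 0))" and dvd: "Y ^ nat (b - a - 1) dvd p"
    and p: "p \<in> yhom (b - 1 - n)" and q: "q \<in> yhom (b - n)" and r: "r \<in> yhom (c - n)"
    by (auto simp: gsum_simps farc_simps iarc_simps)
  have "b - 1 - n + int (nat (c - b)) = c - 1 - n"
    using assms by simp
  then have "Y ^ nat (c - b) * p \<in> yhom (c - 1 - n)"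
    by (metis Y_power_mult_yhom p)
  moreover have "Y ^ nat (c - b) * q - r \<in> yhom (c - n)"
    using Y_power_mult_yhom[OF q, of "nat (c - b)"] assms r by (simp add: yhom_diff)
  ultimately show "ses1_epi b c v \<in> ghom (farc a c) n"
    using dvd by (simp add: v ses1_epi_def farc_simps shift mult_dvd_mono)
qed (auto simp: ses1_epi_def gsum_simps farc_simps iarc_simps algebra_simps smult_diff_right)

lemma short_exact_ses1:
  assumes "a < b" "b \<le> c"
  shows "short_exact (iarc b) (gsum (farc a b) (iarc c)) (farc a c) (ses1_mono b c) (ses1_epi b c)"
  unfolding short_exact_def
proof (intro conjI ballI)
  show "gmor (iarc b) (gsum (farc a b) (iarc c)) (ses1_mono b c)"
    using assms(2) by (rule gmor_ses1_mono)
  show "gmor (gsum (farc a b) (iarc c)) (farc a c) (ses1_epi b c)"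
    using assms by (rule gmor_ses1_epi)
  show "inj_on (ses1_mono b c) (gcar (iarc b))"
    by (auto simp: inj_on_def ses1_mono_def iarc_simps)
  show "ses1_epi b c ` gcar (gsum (farc a b) (iarc c)) = gcar (farc a c)"
  proof
    show "ses1_epi b c ` gcar (gsum (farc a b) (iarc c)) \<subseteq> gcar (farc a c)"
      using gmor_carrier[OF gmor_ses1_epi[OF assms]] by blast
    show "gcar (farc a c) \<subseteq> ses1_epi b c ` gcar (gsum (farc a b) (iarc c))"
    proof
      fix w assume "w \<in> gcar (farc a c)"
      then obtain u q where w: "w = (Y ^ nat (c - a - 1) * u, q)"
        by (auto simp: farc_simps)
      have "nat (c - a - 1) = nat (c - b) + nat (b - a - 1)"
        using assms by simp
      then have "w = ses1_epi b c ((Y ^ nat (b - a - 1) * u, 0), (- q, 0))"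
        by (simp add: w ses1_epi_def power_add mult_ac)
      moreover have "((Y ^ nat (b - a - 1) * u, 0), (- q, 0)) \<in> gcar (gsum (farc a b) (iarc c))"
        by (simp add: gsum_simps farc_simps iarc_simps)
      ultimately show "w \<in> ses1_epi b c ` gcar (gsum (farc a b) (iarc c))"
        by blast
    qed
  qed
  fix v assume "v \<in> gcar (gsum (farc a b) (iarc c))"
  then obtain p q r where v: "v = ((p, q), (r, 0))"
    by (auto simp: gsum_simps iarc_simps)
  show "ses1_epi b c v = gzero (farc a c) \<longleftrightarrow> v \<in> ses1_mono b c ` gcar (iarc b)"
  proof
    assume "ses1_epi b c v = gzero (farc a c)"
    then have "v = ses1_mono b c (q, 0)"
      by (simp add: v ses1_epi_def ses1_mono_def farc_simps)
    then show "v \<in> ses1_mono b c ` gcar (iarc b)"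
      by (auto simp: iarc_simps)
  qed (auto simp: ses1_epi_def ses1_mono_def farc_simps iarc_simps)
qed

lemma ses1_not_split:
  assumes "b < c"
  shows "\<not> ses_split (iarc b) (gsum (farc a b) (iarc c)) (ses1_mono b c)"
proof
  let ?A = "iarc b" and ?B = "gsum (farc a b) (iarc c)"
  define m where "m = nat (b - a - 1)"
  define k where "k = nat (c - b)"
  assume "ses_split ?A ?B (ses1_mono b c)"
  then obtain r where r: "gmor ?B ?A r" and retr: "\<And>v. v \<in> gcar ?A \<Longrightarrow> r (ses1_mono b c v) = v"
    by (auto simp: ses_split_def)
  have y_closed: "\<And>w. w \<in> gcar ?B \<Longrightarrow> gy ?B w \<in> gcar ?B"
    by (rule gsum_gy_closed[OF farc_gy_closed iarc_gy_closed])
  have in_B: "((0, 1), (0, 0)) \<in> gcar ?B" "((0, 0), (1, 0)) \<in> gcar ?B" "((Y ^ m, 0), (0, 0)) \<in> gcar ?B"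
    by (simp_all add: gsum_simps farc_simps iarc_simps m_def)
  obtain p1 where p1: "r ((0, 1), (0, 0)) = (p1, 0)"
    using gmor_carrier[OF r in_B(1)] by (auto simp: iarc_simps)
  obtain p0 where p0: "r ((0, 0), (1, 0)) = (p0, 0)"
    using gmor_carrier[OF r in_B(2)] by (auto simp: iarc_simps)
  have "r ((0, Y ^ m), (0, 0)) = (0, 0)"
    using gmor_gx[OF r in_B(3)] by (simp add: gsum_simps farc_simps iarc_simps)
  moreover have "r ((0, Y ^ m), (0, 0)) = (Y ^ m * p1, 0)"
    using gmor_gy_funpow[OF r y_closed in_B(1), of m]
    by (simp add: gsum_gy_funpow farc_gy_funpow iarc_gy_funpow p1)
  ultimately have "p1 = 0"
    by simp
  have "r ((0, 0), (Y ^ k, 0)) = (Y ^ k * p0, 0)"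
    using gmor_gy_funpow[OF r y_closed in_B(2), of k]
    by (simp add: gsum_gy_funpow farc_gy_funpow iarc_gy_funpow p0)
  then have "(1, 0) = (Y ^ k * p0, 0)"
    using retr[of "(1, 0)"] gmor_gadd[OF r in_B(1), of "((0, 0), (Y ^ k, 0))"] p1 \<open>p1 = 0\<close>
    by (simp add: ses1_mono_def gsum_simps farc_simps iarc_simps k_def)
  then have "Y ^ k dvd Y ^ 0"
    by (metis dvd_triv_left fst_conv power_0)
  then have "k \<le> 0"
    by (simp only: Y_power_dvd_Y_power_iff)
  then show False
    using assms by (simp add: k_def)
qed

subsection \<open>The second sequence\<close>

text \<open>In R: f'(u) = (u, w) for u = y^(c-a-1) w + x v, and g(u, r) = w - y^(b-a) r for
  u = y^(c-b-1) w + x v.\<close>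
definition ses2_mono :: "int \<Rightarrow> int \<Rightarrow> relt \<Rightarrow> relt \<times> relt" where
  "ses2_mono a c = (\<lambda>(p, q). ((p, q), (p div Y ^ nat (c - a - 1), 0)))"

definition ses2_epi :: "int \<Rightarrow> int \<Rightarrow> int \<Rightarrow> relt \<times> relt \<Rightarrow> relt" where
  "ses2_epi a b c = (\<lambda>((p, q), (r, s)). (p div Y ^ nat (c - b - 1) - Y ^ nat (b - a) * r, 0))"

lemma gmor_ses2_mono:
  assumes "a \<le> b" "b < c"
  shows "gmor (farc a c) (gsum (farc b c) (iarc a)) (ses2_mono a c)"
proof (rule gmorI)
  have "Y ^ nat (c - b - 1) dvd Y ^ nat (c - a - 1)"
    using assms by (simp add: Y_power_dvd_Y_power_iff)
  then have dvd: "Y ^ nat (c - b - 1) dvd p" if "Y ^ nat (c - a - 1) dvd p" for p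
    using that dvd_trans by blast
  show "ses2_mono a c v \<in> gcar (gsum (farc b c) (iarc a))" if "v \<in> gcar (farc a c)" for v
    using that by (auto simp: ses2_mono_def gsum_simps farc_simps iarc_simps dvd)
  fix n v assume "v \<in> ghom (farc a c) n"
  then obtain p q where v: "v = (p, q)" and p: "p \<in> yhom (c - 1 - n)" and q: "q \<in> yhom (c - n)"
    and dvd_p: "Y ^ nat (c - a - 1) dvd p"
    by (auto simp: farc_simps)
  have "c - 1 - n - int (nat (c - a - 1)) = a - n"
    using assms by simp
  then have "p div Y ^ nat (c - a - 1) \<in> yhom (a - n)"
    by (metis yhom_div_Y_power p dvd_p)
  with p q dvd_p show "ses2_mono a c v \<in> ghom (gsum (farc b c) (iarc a)) n"
    by (simp add: v ses2_mono_def gsum_simps farc_simps iarc_simps dvd)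
qed (auto simp: ses2_mono_def gsum_simps farc_simps iarc_simps div_smult_left div_mult_swap
      simp del: mult_pCons_left)

lemma gmor_ses2_epi:
  assumes "a \<le> b" "b < c"
  shows "gmor (gsum (farc b c) (iarc a)) (iarc b) (ses2_epi a b c)"
proof (rule gmorI)
  fix n v assume "v \<in> ghom (gsum (farc b c) (iarc a)) n"
  then obtain p q r where v: "v = ((p, q), (r, 0))" and dvd: "Y ^ nat (c - b - 1) dvd p"
    and p: "p \<in> yhom (c - 1 - n)" and r: "r \<in> yhom (a - n)"
    by (auto simp: gsum_simps farc_simps iarc_simps)
  have "c - 1 - n - int (nat (c - b - 1)) = b - n"
    using assms by simp
  then have "p div Y ^ nat (c - b - 1) \<in> yhom (b - n)"
    by (metis yhom_div_Y_power p dvd)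
  moreover have "a - n + int (nat (b - a)) = b - n"
    using assms by simp
  then have "Y ^ nat (b - a) * r \<in> yhom (b - n)"
    by (metis Y_power_mult_yhom r)
  ultimately show "ses2_epi a b c v \<in> ghom (iarc b) n"
    by (simp add: v ses2_epi_def iarc_simps yhom_diff)
next
  fix v assume "v \<in> gcar (gsum (farc b c) (iarc a))"
  then obtain p q r where v: "v = ((p, q), (r, 0))" and dvd: "Y ^ nat (c - b - 1) dvd p"
    by (auto simp: gsum_simps farc_simps iarc_simps)
  then have "(Y * p) div Y ^ nat (c - b - 1) = Y * (p div Y ^ nat (c - b - 1))"
    by (simp add: div_mult_swap del: mult_pCons_left)
  then show "ses2_epi a b c (gy (gsum (farc b c) (iarc a)) v) = gy (iarc b) (ses2_epi a b c v)"
    by (simp add: v ses2_epi_def gsum_simps farc_simps iarc_simps right_diff_distrib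
        mult.left_commute del: mult_pCons_left)
qed (auto simp: ses2_epi_def gsum_simps farc_simps iarc_simps div_smult_left
      smult_diff_right algebra_simps)

lemma short_exact_ses2:
  assumes "a \<le> b" "b < c"
  shows "short_exact (farc a c) (gsum (farc b c) (iarc a)) (iarc b) (ses2_mono a c) (ses2_epi a b c)"
  unfolding short_exact_def
proof (intro conjI ballI)
  define M N D where "M = nat (c - a - 1)" and "N = nat (c - b - 1)" and "D = nat (b - a)"
  have "M = D + N"
    using assms by (simp add: M_def N_def D_def)
  then have M_eq: "Y ^ M = Y ^ N * Y ^ D"
    by (simp add: power_add mult.commute)
  show "gmor (farc a c) (gsum (farc b c) (iarc a)) (ses2_mono a c)"
    using assms by (rule gmor_ses2_mono)
  show "gmor (gsum (farc b c) (iarc a)) (iarc b) (ses2_epi a b c)"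
    using assms by (rule gmor_ses2_epi)
  show "inj_on (ses2_mono a c) (gcar (farc a c))"
    by (auto simp: inj_on_def ses2_mono_def)
  show "ses2_epi a b c ` gcar (gsum (farc b c) (iarc a)) = gcar (iarc b)"
  proof
    show "ses2_epi a b c ` gcar (gsum (farc b c) (iarc a)) \<subseteq> gcar (iarc b)"
      using gmor_carrier[OF gmor_ses2_epi[OF assms]] by blast
    show "gcar (iarc b) \<subseteq> ses2_epi a b c ` gcar (gsum (farc b c) (iarc a))"
    proof
      fix w assume "w \<in> gcar (iarc b)"
      then obtain u where "w = (u, 0)"
        by (auto simp: iarc_simps)
      then have "w = ses2_epi a b c ((Y ^ N * u, 0), (0, 0))"
        by (simp add: ses2_epi_def N_def)
      moreover have "((Y ^ N * u, 0), (0, 0)) \<in> gcar (gsum (farc b c) (iarc a))"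
        by (simp add: gsum_simps farc_simps iarc_simps N_def)
      ultimately show "w \<in> ses2_epi a b c ` gcar (gsum (farc b c) (iarc a))"
        by blast
    qed
  qed
  fix v assume "v \<in> gcar (gsum (farc b c) (iarc a))"
  then obtain u q r where v: "v = ((Y ^ N * u, q), (r, 0))"
    by (auto simp: gsum_simps farc_simps iarc_simps N_def)
  show "ses2_epi a b c v = gzero (iarc b) \<longleftrightarrow> v \<in> ses2_mono a c ` gcar (farc a c)"
  proof
    assume "ses2_epi a b c v = gzero (iarc b)"
    then have "u = Y ^ D * r"
      by (simp add: v ses2_epi_def iarc_simps N_def D_def)
    then have "v = ses2_mono a c (Y ^ M * r, q)"
      by (simp add: v ses2_mono_def M_def[symmetric] M_eq mult_ac)
    then show "v \<in> ses2_mono a c ` gcar (farc a c)"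
      by (auto simp: farc_simps M_def)
  next
    assume "v \<in> ses2_mono a c ` gcar (farc a c)"
    then obtain w where "v = ((Y ^ N * (Y ^ D * w), q), (w, 0))"
      by (auto simp: v ses2_mono_def farc_simps M_def[symmetric] M_eq mult.assoc)
    then show "ses2_epi a b c v = gzero (iarc b)"
      by (simp add: ses2_epi_def iarc_simps N_def D_def del: mult_pCons_left)
  qed
qed

lemma ses2_not_split:
  assumes "a < b" "b < c"
  shows "\<not> ses_split (farc a c) (gsum (farc b c) (iarc a)) (ses2_mono a c)"
proof
  let ?A = "farc a c" and ?B = "gsum (farc b c) (iarc a)"
  define M N D where "M = nat (c - a - 1)" and "N = nat (c - b - 1)" and "D = nat (b - a)"
  have "M = D + N"
    using assms by (simp add: M_def N_def D_def)
  then have M_eq: "Y ^ M = Y ^ D * Y ^ N"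
    by (simp add: power_add mult.commute)
  assume "ses_split ?A ?B (ses2_mono a c)"
  then obtain r where r: "gmor ?B ?A r" and retr: "\<And>v. v \<in> gcar ?A \<Longrightarrow> r (ses2_mono a c v) = v"
    by (auto simp: ses_split_def)
  have y_closed: "\<And>w. w \<in> gcar ?B \<Longrightarrow> gy ?B w \<in> gcar ?B"
    by (rule gsum_gy_closed[OF farc_gy_closed iarc_gy_closed])
  have in_B: "((0, 0), (1, 0)) \<in> gcar ?B" "((Y ^ N, 0), (0, 0)) \<in> gcar ?B"
    "((Y ^ M, 0), (0, 0)) \<in> gcar ?B"
    by (simp_all add: gsum_simps farc_simps iarc_simps N_def[symmetric] M_eq)
  obtain p1 q1 where p1: "r ((0, 0), (1, 0)) = (p1, q1)"
    by fastforce
  obtain p2 q2 where p2: "r ((Y ^ N, 0), (0, 0)) = (p2, q2)" and "Y ^ M dvd p2"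
    using gmor_carrier[OF r in_B(2)] by (auto simp: farc_simps M_def)
  have "(0, p1) = r (gx ?B ((0, 0), (1, 0)))"
    using gmor_gx[OF r in_B(1)] by (simp add: farc_simps p1)
  also have "\<dots> = r (gscale ?B 0 ((0, 0), (1, 0)))"
    by (simp add: gsum_simps farc_simps iarc_simps)
  also have "\<dots> = (0, 0)"
    using gmor_gscale[OF r in_B(1)] by (simp add: farc_simps p1)
  finally have "p1 = 0"
    by simp
  have "r ((Y ^ M, 0), (0, 0)) = (Y ^ D * p2, Y ^ D * q2)"
    using gmor_gy_funpow[OF r y_closed in_B(2), of D]
    by (simp add: gsum_gy_funpow farc_gy_funpow iarc_gy_funpow p2 M_eq del: mult_pCons_left)
  then have "(Y ^ M, 0) = (Y ^ D * p2, Y ^ D * q2 + q1)"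
    using retr[of "(Y ^ M, 0)"] gmor_gadd[OF r in_B(3) in_B(1)] p1 \<open>p1 = 0\<close>
    by (simp add: ses2_mono_def gsum_simps farc_simps iarc_simps M_def del: mult_pCons_left)
  then have "p2 = Y ^ N"
    by (simp add: M_eq del: mult_pCons_left)
  then have "M \<le> N"
    using \<open>Y ^ M dvd p2\<close> by (simp add: Y_power_dvd_Y_power_iff)
  then show False
    using assms by (simp add: M_def N_def)
qed

theorem lemma4p5:
  fixes a b c :: int
  assumes "a < b" and "b < c"
  shows "(\<exists>f g. short_exact (iarc b) (gsum (farc a b) (iarc c)) (farc a c) f g
              \<and> \<not> ses_split (iarc b) (gsum (farc a b) (iarc c)) f)
       \<and> (\<exists>f' g'. short_exact (farc a c) (gsum (farc b c) (iarc a)) (iarc b) f' g'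
              \<and> \<not> ses_split (farc a c) (gsum (farc b c) (iarc a)) f')"
  using short_exact_ses1[OF assms(1) less_imp_le[OF assms(2)]] ses1_not_split[OF assms(2)]
    short_exact_ses2[OF less_imp_le[OF assms(1)] assms(2)] ses2_not_split[OF assms]
  by blast

end
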